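(* Let $T=(V',E_T)$ be a finite tree rooted at a vertex $r$ that is a centroid of $T$. Then $S_c(T)=S_d(T)$.
   Context: For $x,y\in V'$, $d_T(x,y)$ is the number of edges on the path between $x$ and $y$ in $T$. The vertex deviation of $v\in V'$ is $m(v)=\frac{1}{|V'|}\sum_{u\in V'}d_T(v,u)$, and a centroid of $T$ is a vertex minimizing $m(v)$. $S_d(T)=\sum_{x\in V'} d_T(r,x)$ for the root $r$. For an edge $e\in E_T$, removing $e$ splits $T$ into two trees $T_1,T_2$; the cut number of $e$ is $c(e)=\min(|T_1|,|T_2|)$ (sizes counted in vertices), and $S_c(T)=\sum_{e\in E_T}c(e)$. *)

theory Defs
  imports Complex_Main
begin

definition vwalk :: "'a set \<Rightarrow> 'a set set \<Rightarrow> 'a list \<Rightarrow> bool" where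
  "vwalk V E xs \<longleftrightarrow> xs \<noteq> [] \<and> set xs \<subseteq> V \<and>
     (\<forall>i. Suc i < length xs \<longrightarrow> {xs ! i, xs ! Suc i} \<in> E)"

definition is_cycle :: "'a set \<Rightarrow> 'a set set \<Rightarrow> 'a list \<Rightarrow> bool" where
  "is_cycle V E xs \<longleftrightarrow> vwalk V E xs \<and> length xs \<ge> 4 \<and> hd xs = last xs \<and> distinct (tl xs)"

definition reach :: "'a set \<Rightarrow> 'a set set \<Rightarrow> 'a \<Rightarrow> 'a set" where
  "reach V E u = {w. \<exists>xs. vwalk V E xs \<and> hd xs = u \<and> last xs = w}"

definition is_tree :: "'a set \<Rightarrow> 'a set set \<Rightarrow> bool" where
  "is_tree V E \<longleftrightarrow> finite V \<and> V \<noteq> {} \<and>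
     (\<forall>e\<in>E. \<exists>u v. e = {u, v} \<and> u \<noteq> v \<and> u \<in> V \<and> v \<in> V) \<and>
     (\<forall>u\<in>V. reach V E u = V) \<and>
     (\<nexists>xs. is_cycle V E xs)"

definition tdist :: "'a set \<Rightarrow> 'a set set \<Rightarrow> 'a \<Rightarrow> 'a \<Rightarrow> nat" where
  "tdist V E x y = (LEAST n. \<exists>xs. vwalk V E xs \<and> hd xs = x \<and> last xs = y \<and> length xs = Suc n)"

definition vertex_deviation :: "'a set \<Rightarrow> 'a set set \<Rightarrow> 'a \<Rightarrow> real" where
  "vertex_deviation V E v = (1 / real (card V)) * (\<Sum>u\<in>V. real (tdist V E v u))"

definition is_centroid :: "'a set \<Rightarrow> 'a set set \<Rightarrow> 'a \<Rightarrow> bool" where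
  "is_centroid V E v \<longleftrightarrow> v \<in> V \<and> (\<forall>u\<in>V. vertex_deviation V E v \<le> vertex_deviation V E u)"

definition S_d :: "'a set \<Rightarrow> 'a set set \<Rightarrow> 'a \<Rightarrow> nat" where
  "S_d V E r = (\<Sum>x\<in>V. tdist V E r x)"

text \<open>Cut number: removing e = {u,v} splits the tree into the components of u and v.\<close>
definition cut_number :: "'a set \<Rightarrow> 'a set set \<Rightarrow> 'a set \<Rightarrow> nat" where
  "cut_number V E e = Min ((\<lambda>u. card (reach V (E - {e}) u)) ` e)"

definition S_c :: "'a set \<Rightarrow> 'a set set \<Rightarrow> nat" where
  "S_c V E = (\<Sum>e\<in>E. cut_number V E e)"

end

theory Submission
  imports Defs "HOL-Library.Transitive_Closure_Table"
begin

text \<open>In a tree the distance from v to x is the number of edges whose deletion separates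
  v from x, so double counting gives S_d(v) as the sum over all edges e of the size of the
  branch of T - e not containing v. Moving the root along an edge {r, w} changes this sum by
  n - 2 |B|, where B is the branch of T - {r, w} containing w; hence at a centroid every branch
  at r has at most n/2 vertices. Every other branch away from r lies inside one of these, so
  for each edge the branch away from r is the smaller side, whose size is the cut number.\<close>

definition adj :: "'a set set \<Rightarrow> 'a \<Rightarrow> 'a \<Rightarrow> bool" where
  "adj E u v \<longleftrightarrow> {u, v} \<in> E"

lemma symp_adj: "symp (adj E)"
  by (auto intro: sympI simp: adj_def insert_commute)

lemma rtranclp_adj_sym: "(adj E)\<^sup>*\<^sup>* u v \<Longrightarrow> (adj E)\<^sup>*\<^sup>* v u"
  using symp_rtranclp[OF symp_adj] by (rule sympD)

lemma rtranclp_adj_mono: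
  assumes "(adj E)\<^sup>*\<^sup>* u v" and "E \<subseteq> E'"
  shows "(adj E')\<^sup>*\<^sup>* u v"
proof -
  from assms(2) have "adj E \<le> adj E'" by (auto simp: adj_def)
  with assms(1) show ?thesis using rtranclp_mono by blast
qed

lemma rtrancl_path_last_Cons: "rtrancl_path R x ys z \<Longrightarrow> last (x # ys) = z"
  by (induction rule: rtrancl_path.induct) auto

lemma rtrancl_path_Cons_iff: "rtrancl_path R x (y # ys) z \<longleftrightarrow> R x y \<and> rtrancl_path R y ys z"
  by (auto elim: rtrancl_path.cases intro: rtrancl_path.step)

lemma rtrancl_path_adj_subset:
  assumes "\<Union>E \<subseteq> V" and "rtrancl_path (adj E) x ys z"
  shows "set ys \<subseteq> V"
proof
  fix y assume "y \<in> set ys"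
  with assms(2) obtain u where "{u, y} \<in> E" by (auto dest: rtrancl_path_Range simp: adj_def)
  with assms(1) show "y \<in> V" by blast
qed

fun path_edges :: "'a \<Rightarrow> 'a list \<Rightarrow> 'a set set" where
  "path_edges x [] = {}"
| "path_edges x (y # ys) = insert {x, y} (path_edges y ys)"

lemma path_edges_subset_set: "e \<in> path_edges x ys \<Longrightarrow> e \<subseteq> set (x # ys)"
  by (induction x ys rule: path_edges.induct) auto

lemma finite_path_edges: "finite (path_edges x ys)"
  by (induction x ys rule: path_edges.induct) auto

lemma card_path_edges_le: "card (path_edges x ys) \<le> length ys"
  by (induction x ys rule: path_edges.induct) (auto simp: card_insert_if finite_path_edges)

lemma card_path_edges_distinct: "distinct (x # ys) \<Longrightarrow> card (path_edges x ys) = length ys"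
proof (induction x ys rule: path_edges.induct)
  case (2 x y ys)
  then have "{x, y} \<notin> path_edges y ys" using path_edges_subset_set by fastforce
  with 2 show ?case by (simp add: finite_path_edges)
qed simp

lemma rtrancl_path_edges_subset: "rtrancl_path (adj E) x ys z \<Longrightarrow> path_edges x ys \<subseteq> E"
  by (induction rule: rtrancl_path.induct) (auto simp: adj_def)

lemma rtrancl_path_Diff_edge:
  "rtrancl_path (adj E) x ys z \<Longrightarrow> e \<notin> path_edges x ys \<Longrightarrow> rtrancl_path (adj (E - {e})) x ys z"
  by (induction rule: rtrancl_path.induct) (auto simp: adj_def intro: rtrancl_path.intros)

lemma rtranclp_adj_first_edge:
  assumes "(adj E)\<^sup>*\<^sup>* r b" and "r \<noteq> b"
  obtains w where "adj E r w" and "(adj (E - {{r, w}}))\<^sup>*\<^sup>* w b"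
proof -
  obtain qs where qs: "rtrancl_path (adj E) r qs b" and d: "distinct (r # qs)"
    using assms(1) by (metis rtranclp_eq_rtrancl_path rtrancl_path_distinct)
  then obtain w ws where qs_eq: "qs = w # ws"
    using assms(2) by (cases qs) (auto elim: rtrancl_path.cases)
  with qs have "adj E r w" and ws: "rtrancl_path (adj E) w ws b"
    by (auto elim: rtrancl_path.cases)
  moreover have "{r, w} \<notin> path_edges w ws"
    using path_edges_subset_set d qs_eq by fastforce
  ultimately show thesis
    using that rtrancl_path_Diff_edge by (metis rtranclp_eq_rtrancl_path)
qed

lemma rtranclp_adj_Diff_incident:
  assumes "(adj E)\<^sup>*\<^sup>* x b" and "\<not> (adj E)\<^sup>*\<^sup>* r b" and "r \<in> f"
  shows "(adj (E - {f}))\<^sup>*\<^sup>* x b"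
  using assms(1)
proof (induction rule: converse_rtranclp_induct)
  case (step x y)
  have "(adj E)\<^sup>*\<^sup>* x b"
    using step.hyps by (rule converse_rtranclp_into_rtranclp)
  with step.hyps(2) assms(2,3) have "{x, y} \<noteq> f" by auto
  with step.hyps(1) have "adj (E - {f}) x y" by (simp add: adj_def)
  from this step.IH show ?case by (rule converse_rtranclp_into_rtranclp)
qed simp

lemma rtranclp_adj_Diff_edge_cases:
  assumes "(adj E)\<^sup>*\<^sup>* a x"
  shows "(adj (E - {{a, b}}))\<^sup>*\<^sup>* a x \<or> (adj (E - {{a, b}}))\<^sup>*\<^sup>* b x"
  using assms
proof (induction rule: rtranclp_induct)
  case (step y z)
  show ?case
  proof (cases "{y, z} = {a, b}")
    case True
    then show ?thesis by (auto simp: doubleton_eq_iff)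
  next
    case False
    with step.hyps(2) have "adj (E - {{a, b}}) y z" by (simp add: adj_def)
    with step.IH show ?thesis by (meson rtranclp.rtrancl_into_rtrancl)
  qed
qed simp

lemma vwalk_Cons_Cons:
  "vwalk V E (x # y # ys) \<longleftrightarrow> x \<in> V \<and> {x, y} \<in> E \<and> vwalk V E (y # ys)"
  unfolding vwalk_def by (auto simp: less_Suc_eq_0_disj all_conj_distrib)

lemma vwalk_Cons_iff_rtrancl_path:
  "vwalk V E (x # ys) \<longleftrightarrow> x \<in> V \<and> set ys \<subseteq> V \<and> rtrancl_path (adj E) x ys (last (x # ys))"
proof (induction ys arbitrary: x)
  case Nil
  then show ?case by (auto simp: vwalk_def intro: rtrancl_path.base)
next
  case (Cons y ys)
  then show ?case by (auto simp: vwalk_Cons_Cons rtrancl_path_Cons_iff adj_def)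
qed

lemma vwalk_iff_rtrancl_path:
  assumes "\<Union>E \<subseteq> V"
  shows "vwalk V E xs \<and> hd xs = x \<and> last xs = y \<longleftrightarrow>
    x \<in> V \<and> (\<exists>ys. xs = x # ys \<and> rtrancl_path (adj E) x ys y)"
proof
  assume walk: "vwalk V E xs \<and> hd xs = x \<and> last xs = y"
  then obtain ys where "xs = x # ys" by (cases xs) (auto simp: vwalk_def)
  with walk show "x \<in> V \<and> (\<exists>ys. xs = x # ys \<and> rtrancl_path (adj E) x ys y)"
    by (auto simp: vwalk_Cons_iff_rtrancl_path)
next
  assume "x \<in> V \<and> (\<exists>ys. xs = x # ys \<and> rtrancl_path (adj E) x ys y)"
  then obtain ys where x: "x \<in> V" and xs: "xs = x # ys" and path: "rtrancl_path (adj E) x ys y"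
    by blast
  from path have "rtrancl_path (adj E) x ys (last (x # ys))"
    by (simp only: rtrancl_path_last_Cons[OF path])
  with x rtrancl_path_adj_subset[OF assms path] have "vwalk V E xs"
    by (simp add: xs vwalk_Cons_iff_rtrancl_path)
  with xs rtrancl_path_last_Cons[OF path] show "vwalk V E xs \<and> hd xs = x \<and> last xs = y"
    by simp
qed

lemma reach_subset: "reach V E u \<subseteq> V"
  by (auto simp: reach_def vwalk_def)

lemma reach_eq_rtranclp: "\<Union>E \<subseteq> V \<Longrightarrow> reach V E u = {w. u \<in> V \<and> (adj E)\<^sup>*\<^sup>* u w}"
  by (auto simp: reach_def vwalk_iff_rtrancl_path rtranclp_eq_rtrancl_path)

lemma tdist_eq_Least_rtrancl_path:
  assumes "\<Union>E \<subseteq> V" and "x \<in> V"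
  shows "tdist V E x y = (LEAST n. \<exists>ys. rtrancl_path (adj E) x ys y \<and> length ys = n)"
proof -
  have "(\<exists>xs. vwalk V E xs \<and> hd xs = x \<and> last xs = y \<and> length xs = Suc n) \<longleftrightarrow>
      (\<exists>ys. rtrancl_path (adj E) x ys y \<and> length ys = n)" for n
  proof
    assume "\<exists>xs. vwalk V E xs \<and> hd xs = x \<and> last xs = y \<and> length xs = Suc n"
    then obtain xs where "vwalk V E xs \<and> hd xs = x \<and> last xs = y" and "length xs = Suc n"
      by blast
    then show "\<exists>ys. rtrancl_path (adj E) x ys y \<and> length ys = n"
      unfolding vwalk_iff_rtrancl_path[OF assms(1)] by auto
  next
    assume "\<exists>ys. rtrancl_path (adj E) x ys y \<and> length ys = n"
    then obtain ys where "rtrancl_path (adj E) x ys y" and "length ys = n"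
      by blast
    moreover from this(1) have "vwalk V E (x # ys) \<and> hd (x # ys) = x \<and> last (x # ys) = y"
      using assms(2) vwalk_iff_rtrancl_path[OF assms(1)] by blast
    ultimately show "\<exists>xs. vwalk V E xs \<and> hd xs = x \<and> last xs = y \<and> length xs = Suc n"
      by (metis length_Cons)
  qed
  then show ?thesis by (simp add: tdist_def)
qed

definition far_side :: "'a set \<Rightarrow> 'a set set \<Rightarrow> 'a set \<Rightarrow> 'a \<Rightarrow> 'a set" where
  "far_side V E e v = V - reach V (E - {e}) v"

context
  fixes V :: "'a set" and E :: "'a set set"
  assumes tree: "is_tree V E"
begin

lemma tree_finite: "finite V"
  using tree by (simp add: is_tree_def)

lemma tree_edgeE:
  assumes "e \<in> E"
  obtains u v where "e = {u, v}" and "u \<noteq> v" and "u \<in> V" and "v \<in> V"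
  using tree assms that unfolding is_tree_def by blast

lemma tree_Union_edges: "\<Union>E \<subseteq> V"
  by (blast elim: tree_edgeE)

lemma tree_finite_edges: "finite E"
  using tree_Union_edges tree_finite by (meson finite_UnionD finite_subset)

lemma tree_reach: "E' \<subseteq> E \<Longrightarrow> reach V E' u = {w. u \<in> V \<and> (adj E')\<^sup>*\<^sup>* u w}"
  using tree_Union_edges by (intro reach_eq_rtranclp) blast

lemma tree_connected: "u \<in> V \<Longrightarrow> w \<in> V \<Longrightarrow> (adj E)\<^sup>*\<^sup>* u w"
  using tree tree_reach[of E u] by (auto simp: is_tree_def)

lemma tree_edge_endpoints:
  assumes "{a, b} \<in> E"
  shows "a \<noteq> b" and "a \<in> V" and "b \<in> V"
  using tree_edgeE[OF assms] by (metis doubleton_eq_iff)+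

lemma tree_edge_bridge:
  assumes ab: "{a, b} \<in> E"
  shows "\<not> (adj (E - {{a, b}}))\<^sup>*\<^sup>* a b"
proof
  assume "(adj (E - {{a, b}}))\<^sup>*\<^sup>* a b"
  then obtain qs where qs: "rtrancl_path (adj (E - {{a, b}})) a qs b" and d: "distinct (a # qs)"
    by (metis rtranclp_eq_rtrancl_path rtrancl_path_distinct)
  have "2 \<le> length qs"
  proof (cases qs)
    case Nil
    with qs tree_edge_endpoints(1)[OF ab] show ?thesis by (auto elim: rtrancl_path.cases)
  next
    case (Cons c cs)
    with qs show ?thesis by (cases cs) (auto simp: rtrancl_path_Cons_iff adj_def elim: rtrancl_path.cases)
  qed
  have "rtrancl_path (adj E) a qs b"
    using qs by (rule rtrancl_path_mono) (auto simp: adj_def)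
  moreover have "rtrancl_path (adj E) b [a] a"
    using ab by (simp add: rtrancl_path_Cons_iff adj_def insert_commute rtrancl_path.base)
  ultimately have "rtrancl_path (adj E) a (qs @ [a]) a"
    by (rule rtrancl_path_trans)
  then have "vwalk V E (a # qs @ [a])"
    using vwalk_iff_rtrancl_path[OF tree_Union_edges] tree_edge_endpoints(2)[OF ab] by blast
  with \<open>2 \<le> length qs\<close> d have "is_cycle V E (a # qs @ [a])"
    by (simp add: is_cycle_def)
  with tree show False
    by (auto simp: is_tree_def)
qed

lemma distinct_path_edge_separates:
  "rtrancl_path (adj E) x ys z \<Longrightarrow> distinct (x # ys) \<Longrightarrow> e \<in> path_edges x ys \<Longrightarrow>
    \<not> (adj (E - {e}))\<^sup>*\<^sup>* x z"
proof (induction rule: rtrancl_path.induct)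
  case (step x y ys z)
  show ?case
  proof (cases "e = {x, y}")
    case True
    with step.prems(1) have "e \<notin> path_edges y ys"
      using path_edges_subset_set by fastforce
    with step.hyps(2) have "(adj (E - {e}))\<^sup>*\<^sup>* y z"
      by (auto simp: rtranclp_eq_rtrancl_path dest: rtrancl_path_Diff_edge)
    with True step.hyps(1) show ?thesis
      using tree_edge_bridge[of x y] by (meson adj_def rtranclp_adj_sym rtranclp_trans)
  next
    case False
    with step have "\<not> (adj (E - {e}))\<^sup>*\<^sup>* y z" by simp
    moreover from False step.hyps(1) have "adj (E - {e}) y x"
      by (auto simp: adj_def insert_commute)
    ultimately show ?thesis by (meson converse_rtranclp_into_rtranclp)
  qed
qed simp

lemma mem_far_side:
  "v \<in> V \<Longrightarrow> x \<in> far_side V E e v \<longleftrightarrow> x \<in> V \<and> \<not> (adj (E - {e}))\<^sup>*\<^sup>* v x"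
  by (auto simp: far_side_def tree_reach)

lemma tdist_eq_card_separating:
  assumes v: "v \<in> V" and x: "x \<in> V"
  shows "tdist V E v x = card {e \<in> E. x \<in> far_side V E e v}"
proof -
  let ?S = "{e \<in> E. x \<in> far_side V E e v}"
  have S: "?S = {e \<in> E. \<not> (adj (E - {e}))\<^sup>*\<^sup>* v x}"
    using mem_far_side[OF v] x by auto
  have S_subset: "?S \<subseteq> path_edges v ys" if "rtrancl_path (adj E) v ys x" for ys
    using that S rtrancl_path_Diff_edge by (fastforce simp: rtranclp_eq_rtrancl_path)
  obtain qs where qs: "rtrancl_path (adj E) v qs x" and d: "distinct (v # qs)"
    using tree_connected[OF v x] by (metis rtranclp_eq_rtrancl_path rtrancl_path_distinct)
  have "path_edges v qs \<subseteq> ?S"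
    using rtrancl_path_edges_subset[OF qs] distinct_path_edge_separates[OF qs d] S by auto
  with S_subset[OF qs] have card_S: "card ?S = length qs"
    using card_path_edges_distinct[OF d] by auto
  have "tdist V E v x = length qs"
    unfolding tdist_eq_Least_rtrancl_path[OF tree_Union_edges v]
  proof (rule Least_equality)
    fix n assume "\<exists>ys. rtrancl_path (adj E) v ys x \<and> length ys = n"
    then obtain ys where ys: "rtrancl_path (adj E) v ys x" and "length ys = n" by blast
    have "length qs \<le> card (path_edges v ys)"
      using card_S card_mono[OF finite_path_edges S_subset[OF ys]] by simp
    with card_path_edges_le \<open>length ys = n\<close> show "length qs \<le> n" by (metis le_trans)
  qed (use qs in blast)
  with card_S show ?thesis by simp
qed

lemma sum_tdist_eq_sum_card_far_side:
  assumes "v \<in> V"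
  shows "(\<Sum>x\<in>V. tdist V E v x) = (\<Sum>e\<in>E. card (far_side V E e v))"
proof -
  have "(\<Sum>x\<in>V. tdist V E v x) = (\<Sum>x\<in>V. \<Sum>e\<in>E. of_bool (x \<in> far_side V E e v))"
    using tdist_eq_card_separating[OF assms] tree_finite_edges by (simp add: Int_def)
  also have "\<dots> = (\<Sum>e\<in>E. \<Sum>x\<in>V. of_bool (x \<in> far_side V E e v))"
    by (rule sum.swap)
  also have "\<dots> = (\<Sum>e\<in>E. card (far_side V E e v))"
    using tree_finite by (simp add: far_side_def set_diff_eq Int_def)
  finally show ?thesis .
qed

lemma reach_Diff_edge_complement:
  assumes pq: "{p, q} \<in> E"
  shows "reach V (E - {{p, q}}) q = V - reach V (E - {{p, q}}) p"
proof -
  let ?E = "E - {{p, q}}"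
  have p: "p \<in> V" and q: "q \<in> V" using tree_edge_endpoints[OF pq] by auto
  have "(adj ?E)\<^sup>*\<^sup>* q x \<longleftrightarrow> x \<in> V \<and> \<not> (adj ?E)\<^sup>*\<^sup>* p x" for x
  proof
    assume qx: "(adj ?E)\<^sup>*\<^sup>* q x"
    then have "x \<in> reach V ?E q" using q tree_reach[of ?E q] by auto
    with reach_subset have "x \<in> V" by (rule subsetD)
    moreover have "\<not> (adj ?E)\<^sup>*\<^sup>* p x"
      using qx tree_edge_bridge[OF pq] by (meson rtranclp_adj_sym rtranclp_trans)
    ultimately show "x \<in> V \<and> \<not> (adj ?E)\<^sup>*\<^sup>* p x" ..
  next
    assume "x \<in> V \<and> \<not> (adj ?E)\<^sup>*\<^sup>* p x"
    then show "(adj ?E)\<^sup>*\<^sup>* q x"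
      using rtranclp_adj_Diff_edge_cases[OF tree_connected[OF p], of x q] by blast
  qed
  with p q show ?thesis by (auto simp: tree_reach)
qed

lemma reach_Diff_eq_if_rtranclp:
  assumes u: "u \<in> V" and uv: "(adj (E - {e}))\<^sup>*\<^sup>* u v"
  shows "reach V (E - {e}) u = reach V (E - {e}) v"
proof -
  have "v \<in> reach V (E - {e}) u" using assms by (simp add: tree_reach)
  with reach_subset have "v \<in> V" by (rule subsetD)
  moreover have "(adj (E - {e}))\<^sup>*\<^sup>* u x \<longleftrightarrow> (adj (E - {e}))\<^sup>*\<^sup>* v x" for x
    using uv rtranclp_adj_sym[OF uv] by (meson rtranclp_trans)
  ultimately show ?thesis
    using u by (simp add: tree_reach)
qed

lemma reach_Diff_edge_endpoints:
  assumes e: "e \<in> E" and v: "v \<in> V"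
  shows "(\<lambda>u. reach V (E - {e}) u) ` e = {reach V (E - {e}) v, far_side V E e v}"
proof -
  obtain p q where e_eq: "e = {p, q}" and p: "p \<in> V" and q: "q \<in> V"
    using tree_edgeE[OF e] by metis
  let ?R = "\<lambda>u. reach V (E - {e}) u"
  have compl_q: "?R q = V - ?R p"
    using reach_Diff_edge_complement e by (simp add: e_eq)
  then have compl_p: "?R p = V - ?R q"
    using reach_subset[of V "E - {e}" p] by blast
  have "?R v = ?R p \<or> ?R v = ?R q"
    using rtranclp_adj_Diff_edge_cases[OF tree_connected[OF p v], of q]
      reach_Diff_eq_if_rtranclp[OF p] reach_Diff_eq_if_rtranclp[OF q] e_eq by metis
  with compl_p compl_q show ?thesis
    unfolding far_side_def e_eq by auto
qed

lemma cut_number_eq_min_far_side: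
  assumes e: "e \<in> E" and v: "v \<in> V"
  shows "cut_number V E e = min (card (far_side V E e v)) (card V - card (far_side V E e v))"
proof -
  have "card (far_side V E e v) = card V - card (reach V (E - {e}) v)"
    unfolding far_side_def using tree_finite reach_subset[of V "E - {e}" v]
    by (metis card_Diff_subset finite_subset)
  then have "card (reach V (E - {e}) v) = card V - card (far_side V E e v)"
    using tree_finite reach_subset[of V "E - {e}" v] card_mono by (metis diff_diff_cancel)
  moreover have "cut_number V E e = Min (card ` (\<lambda>u. reach V (E - {e}) u) ` e)"
    by (simp add: cut_number_def image_image)
  ultimately show ?thesis
    by (simp add: reach_Diff_edge_endpoints[OF assms] min.commute)
qed

lemma far_side_connected:
  assumes "e \<in> E" and "v \<in> V" and "x \<in> far_side V E e v" and "y \<in> far_side V E e v"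
  shows "(adj (E - {e}))\<^sup>*\<^sup>* x y"
proof -
  obtain c where "far_side V E e v = reach V (E - {e}) c"
    using reach_Diff_edge_endpoints[OF assms(1,2)] by (metis imageE insertI1 insert_commute)
  with assms(3,4) have "(adj (E - {e}))\<^sup>*\<^sup>* c x" and "(adj (E - {e}))\<^sup>*\<^sup>* c y"
    by (auto simp: tree_reach)
  then show ?thesis by (meson rtranclp_adj_sym rtranclp_trans)
qed

lemma far_side_adjacent_complement:
  assumes "{r, w} \<in> E"
  shows "far_side V E {r, w} w = V - far_side V E {r, w} r"
  using reach_Diff_edge_complement[OF assms] reach_subset[of V "E - {{r, w}}" r]
  by (auto simp: far_side_def)

lemma sum_tdist_adjacent:
  assumes f: "{r, w} \<in> E"
  shows "(\<Sum>x\<in>V. tdist V E w x) + card (far_side V E {r, w} r)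
    = (\<Sum>x\<in>V. tdist V E r x) + card (far_side V E {r, w} w)"
proof -
  let ?f = "{r, w}"
  have r: "r \<in> V" and w: "w \<in> V" using tree_edge_endpoints[OF f] by auto
  have same: "card (far_side V E e w) = card (far_side V E e r)" if "e \<in> E - {?f}" for e
  proof -
    from that f have "adj (E - {e}) r w" by (auto simp: adj_def)
    then have "reach V (E - {e}) r = reach V (E - {e}) w"
      by (intro reach_Diff_eq_if_rtranclp[OF r] r_into_rtranclp)
    then show ?thesis by (simp add: far_side_def)
  qed
  have split: "(\<Sum>x\<in>V. tdist V E v x)
      = card (far_side V E ?f v) + (\<Sum>e\<in>E - {?f}. card (far_side V E e v))" if "v \<in> V" for v
    using sum_tdist_eq_sum_card_far_side[OF that] tree_finite_edges f by (simp add: sum.remove)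
  have "(\<Sum>e\<in>E - {?f}. card (far_side V E e w)) = (\<Sum>e\<in>E - {?f}. card (far_side V E e r))"
    using same by (rule sum.cong[OF refl])
  with split[OF r] split[OF w] show ?thesis by simp
qed

lemma centroid_sum_tdist_le:
  assumes "is_centroid V E r" and "w \<in> V"
  shows "(\<Sum>x\<in>V. tdist V E r x) \<le> (\<Sum>x\<in>V. tdist V E w x)"
proof -
  have "card V > 0" using assms tree_finite by (auto simp: card_gt_0_iff)
  moreover have "vertex_deviation V E r \<le> vertex_deviation V E w"
    using assms by (simp add: is_centroid_def)
  ultimately have "real (\<Sum>x\<in>V. tdist V E r x) \<le> real (\<Sum>x\<in>V. tdist V E w x)"
    by (simp add: vertex_deviation_def divide_le_cancel)
  then show ?thesis by linarith
qed

lemma centroid_far_side_adjacent_le: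
  assumes cen: "is_centroid V E r" and f: "{r, w} \<in> E"
  shows "2 * card (far_side V E {r, w} r) \<le> card V"
proof -
  have "card (far_side V E {r, w} r) + card (far_side V E {r, w} w) = card V"
    using far_side_adjacent_complement[OF f] tree_finite
    by (metis Diff_subset card_Diff_subset card_mono finite_subset far_side_def le_add_diff_inverse)
  with sum_tdist_adjacent[OF f] centroid_sum_tdist_le[OF cen tree_edge_endpoints(3)[OF f]]
  show ?thesis by linarith
qed

text \<open>The branch of e away from a centroid r lies inside the branch of the first edge on the
  path from r towards it, so the adjacent case suffices.\<close>
lemma centroid_far_side_le:
  assumes cen: "is_centroid V E r" and e: "e \<in> E"
  shows "2 * card (far_side V E e r) \<le> card V"
proof (cases "far_side V E e r = {}")
  case False
  then obtain b where b: "b \<in> far_side V E e r" by blast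
  have r: "r \<in> V" using cen by (simp add: is_centroid_def)
  with b have b_V: "b \<in> V" and not_rb: "\<not> (adj (E - {e}))\<^sup>*\<^sup>* r b"
    by (simp_all add: mem_far_side)
  then have "r \<noteq> b" by auto
  with tree_connected[OF r b_V] obtain w where rw: "adj E r w" and wb: "(adj (E - {{r, w}}))\<^sup>*\<^sup>* w b"
    by (rule rtranclp_adj_first_edge)
  let ?f = "{r, w}"
  have f: "?f \<in> E" using rw by (simp add: adj_def)
  have "far_side V E e r \<subseteq> far_side V E ?f r"
  proof
    fix x assume x: "x \<in> far_side V E e r"
    have "(adj (E - {e}))\<^sup>*\<^sup>* x b"
      by (rule far_side_connected[OF e r x b])
    then have "(adj (E - {e} - {?f}))\<^sup>*\<^sup>* x b"
      using not_rb by (rule rtranclp_adj_Diff_incident) simp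
    then have xb: "(adj (E - {?f}))\<^sup>*\<^sup>* x b"
      by (rule rtranclp_adj_mono) blast
    have "\<not> (adj (E - {?f}))\<^sup>*\<^sup>* r x"
    proof
      assume "(adj (E - {?f}))\<^sup>*\<^sup>* r x"
      with xb wb have "(adj (E - {?f}))\<^sup>*\<^sup>* r w" by (meson rtranclp_adj_sym rtranclp_trans)
      with tree_edge_bridge[OF f] show False ..
    qed
    with x r show "x \<in> far_side V E ?f r" by (simp add: mem_far_side)
  qed
  then have "card (far_side V E e r) \<le> card (far_side V E ?f r)"
    using tree_finite by (intro card_mono) (auto simp: far_side_def)
  with centroid_far_side_adjacent_le[OF cen f] show ?thesis by linarith
qed simp

lemma centroid_cut_number_eq:
  assumes "is_centroid V E r" and "e \<in> E"
  shows "cut_number V E e = card (far_side V E e r)"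
proof -
  have "r \<in> V" using assms(1) by (simp add: is_centroid_def)
  with centroid_far_side_le[OF assms] show ?thesis
    using cut_number_eq_min_far_side[OF assms(2)] by (simp add: min_def)
qed

end

theorem lemma5p13:
  fixes V :: "'a set" and E :: "'a set set" and r :: 'a
  assumes "is_tree V E"
    and "r \<in> V"
    and "is_centroid V E r"
  shows "S_c V E = S_d V E r"
proof -
  have "S_c V E = (\<Sum>e\<in>E. card (far_side V E e r))"
    unfolding S_c_def using centroid_cut_number_eq[OF assms(1,3)] by simp
  also have "\<dots> = S_d V E r"
    unfolding S_d_def using sum_tdist_eq_sum_card_far_side[OF assms(1,2)] by simp
  finally show ?thesis .
qed

end
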